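(* Let $\phi\in X_1$, $t>0$ and $a\in(0,\tfrac12)$, and let $u$ be the global viscosity solution. Then: if $u_t(\cdot,t)\le0$ in $(0,a)$, then $u_x(\cdot,t)\le U^*_x$ in $(0,a)$; and if $u_t(\cdot,t)\ge0$ in $(0,a)$ and $u_x(0,t)=\infty$, then $u_x(\cdot,t)\ge U^*_x$ in $(0,a)$.
   Context: $p>2$. Problem (1D): $u_t-u_{xx}=|u_x|^p$ on $(0,1)\times(0,\infty)$, $u(0,t)=u(1,t)=0$, $u(\cdot,0)=\phi$. $X_1=\{\phi\in C^1([0,1]):\phi\ge0,\phi(0)=\phi(1)=0\}$. The global viscosity solution $u$ is continuous on $[0,1]\times[0,\infty)$, belongs to $C^{2,1}((0,1)\times(0,\infty))$ and solves the PDE pointwise there, but possibly $u(0,t)>0$. For $t>0$, $u_x(0,t):=\lim_{x\to0^+}u_x(x,t)\in\mathbb R\cup\{+\infty\}$ exists. $\alpha=\frac{p-2}{p-1}$, $c_p=(p-2)^{-1}(p-1)^{(p-2)/(p-1)}$, $U^*(x)=c_px^\alpha$ (so $U^*_x(x)=((p-1)x)^{-1/(p-1)}$). *)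

theory Defs
  imports "HOL-Analysis.Analysis"
begin

definition X1 :: "(real \<Rightarrow> real) set" where
  "X1 = {\<phi>. (\<exists>\<phi>'. continuous_on {0..1} \<phi>' \<and>
               (\<forall>x\<in>{0..1}. (\<phi> has_real_derivative \<phi>' x) (at x within {0..1}))) \<and>
             (\<forall>x\<in>{0..1}. \<phi> x \<ge> 0) \<and> \<phi> 0 = 0 \<and> \<phi> 1 = 0}"

definition alpha_p :: "real \<Rightarrow> real" where
  "alpha_p p = (p - 2) / (p - 1)"

definition c_p :: "real \<Rightarrow> real" where
  "c_p p = (p - 1) powr ((p - 2) / (p - 1)) / (p - 2)"

definition Ustar :: "real \<Rightarrow> real \<Rightarrow> real" where
  "Ustar p x = c_p p * x powr alpha_p p"

definition Ustar_x :: "real \<Rightarrow> real \<Rightarrow> real" where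
  "Ustar_x p x = ((p - 1) * x) powr (- 1 / (p - 1))"

end

theory Submission
  imports Defs
begin

text \<open>Along a time slice, v = u_x(\<cdot>,t) satisfies v' = u_t - |v|^p, so a sign of u_t makes v a
  super- or subsolution of v' = -|v|^p. While v > 0 the quantity v^(1-p) - (p-1)x has derivative
  (p-1)v^(-p)(-v' - v^p), hence is monotone, and it vanishes identically for v = U^*_x.
  If v(x_0) > U^*_x(x_0), then v is decreasing, so it stays above v(x_0) to the left and
  v^(1-p) would have to become nonpositive before x = 0. If v(x_0) < U^*_x(x_0) and v blows up
  at 0, then following v from a point y near 0 where v(y)^(1-p) is tiny up to its first drop
  to a level b < U^*_x(x_0) forces v(y)^(1-p) \<ge> b^(1-p) - (p-1)x_0 > 0.\<close>

lemma has_real_derivative_powr_minus_linear: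
  fixes v :: "real \<Rightarrow> real"
  assumes v': "(v has_real_derivative d) (at x)" and pos: "v x > 0"
  shows "((\<lambda>s. v s powr (1 - p) - (p - 1) * s) has_real_derivative
           (p - 1) * v x powr (- p) * (- d - v x powr p)) (at x)"
proof -
  have "((\<lambda>s. v s powr (1 - p)) has_real_derivative (1 - p) * v x powr (- p) * d) (at x)"
    using DERIV_fun_powr[OF v' pos, of "1 - p"] by simp
  then have "((\<lambda>s. v s powr (1 - p) - (p - 1) * s) has_real_derivative
          (1 - p) * v x powr (- p) * d - (p - 1)) (at x)"
    by (intro DERIV_diff DERIV_cmult_Id)
  moreover have "v x powr (- p) * v x powr p = 1"
    using pos by (simp add: powr_add [symmetric])
  ultimately show ?thesis
    by (simp add: algebra_simps)
qed

lemma powr_one_minus_increase_if_deriv_le: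
  fixes v d :: "real \<Rightarrow> real"
  assumes p: "p > 1" and "y \<le> z"
    and v': "\<And>x. x \<in> {y..z} \<Longrightarrow> (v has_real_derivative d x) (at x)"
    and pos: "\<And>x. x \<in> {y..z} \<Longrightarrow> v x > 0"
    and d: "\<And>x. x \<in> {y..z} \<Longrightarrow> d x \<le> - (v x powr p)"
  shows "v y powr (1 - p) + (p - 1) * (z - y) \<le> v z powr (1 - p)"
proof -
  have "v y powr (1 - p) - (p - 1) * y \<le> v z powr (1 - p) - (p - 1) * z"
  proof (rule deriv_nonneg_imp_mono[OF _ _ \<open>y \<le> z\<close>])
    fix x assume "x \<in> {y..z}"
    then show "((\<lambda>s. v s powr (1 - p) - (p - 1) * s) has_real_derivative
        (p - 1) * v x powr (- p) * (- d x - v x powr p)) (at x)"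
      by (intro has_real_derivative_powr_minus_linear v' pos)
    show "0 \<le> (p - 1) * v x powr (- p) * (- d x - v x powr p)"
      using p d[of x] \<open>x \<in> {y..z}\<close> by simp
  qed
  then show ?thesis
    by (simp add: algebra_simps)
qed

lemma powr_one_minus_decrease_if_deriv_ge:
  fixes v d :: "real \<Rightarrow> real"
  assumes p: "p > 1" and "y \<le> z"
    and v': "\<And>x. x \<in> {y..z} \<Longrightarrow> (v has_real_derivative d x) (at x)"
    and pos: "\<And>x. x \<in> {y..z} \<Longrightarrow> v x > 0"
    and d: "\<And>x. x \<in> {y..z} \<Longrightarrow> d x \<ge> - (v x powr p)"
  shows "v z powr (1 - p) \<le> v y powr (1 - p) + (p - 1) * (z - y)"
proof -
  have "v z powr (1 - p) - (p - 1) * z \<le> v y powr (1 - p) - (p - 1) * y"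
  proof (rule deriv_nonpos_imp_antimono[OF _ _ \<open>y \<le> z\<close>])
    fix x assume "x \<in> {y..z}"
    then show "((\<lambda>s. v s powr (1 - p) - (p - 1) * s) has_real_derivative
        (p - 1) * v x powr (- p) * (- d x - v x powr p)) (at x)"
      by (intro has_real_derivative_powr_minus_linear v' pos)
    show "(p - 1) * v x powr (- p) * (- d x - v x powr p) \<le> 0"
      using p d[of x] \<open>x \<in> {y..z}\<close> by (simp add: mult_nonneg_nonpos)
  qed
  then show ?thesis
    by (simp add: algebra_simps)
qed

lemma Ustar_x_pos: "p > 1 \<Longrightarrow> x > 0 \<Longrightarrow> Ustar_x p x > 0"
  by (simp add: Ustar_x_def)

lemma Ustar_x_powr_one_minus:
  assumes "p > 1" "x > 0"
  shows "Ustar_x p x powr (1 - p) = (p - 1) * x"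
proof -
  have "Ustar_x p x powr (1 - p) = ((p - 1) * x) powr (- 1 / (p - 1) * (1 - p))"
    by (simp add: Ustar_x_def powr_powr)
  also have "- 1 / (p - 1) * (1 - p) = 1"
    using assms by (simp add: field_simps)
  finally show ?thesis
    using assms by simp
qed

lemma first_descent_to_level:
  fixes f :: "real \<Rightarrow> real"
  assumes "y \<le> x" and cont: "continuous_on {y..x} f" and "b \<le> f y" "f x \<le> b"
  obtains z where "y \<le> z" "z \<le> x" "f z = b" "\<And>s. s \<in> {y..z} \<Longrightarrow> b \<le> f s"
proof -
  define S where "S = {y..x} \<inter> f -` {..b}"
  have "closed S"
    unfolding S_def by (rule continuous_closed_preimage[OF cont]) auto
  moreover have "x \<in> S" "bdd_below S"
    using assms by (auto simp: S_def intro: bdd_belowI[of _ y])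
  ultimately have "Inf S \<in> S" and first: "\<And>s. s \<in> S \<Longrightarrow> Inf S \<le> s"
    by (auto intro: closed_contains_Inf cInf_lower)
  then have z: "y \<le> Inf S" "Inf S \<le> x" "f (Inf S) \<le> b"
    by (auto simp: S_def)
  have "continuous_on {y..Inf S} f"
    using z by (intro continuous_on_subset[OF cont]) auto
  then obtain w where w: "y \<le> w" "w \<le> Inf S" "f w = b"
    using IVT2'[of f "Inf S" b y] z \<open>b \<le> f y\<close> by auto
  then have "w \<in> S"
    using z by (auto simp: S_def)
  with w first have "f (Inf S) = b"
    by (metis order.antisym)
  moreover have "b \<le> f s" if "s \<in> {y..Inf S}" for s
  proof (cases "s = Inf S")
    case False
    with that first[of s] z show ?thesis
      by (force simp: S_def)
  qed (use \<open>f (Inf S) = b\<close> in simp)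
  ultimately show ?thesis
    using that z by blast
qed

lemma supersolution_le_Ustar_x:
  fixes v d :: "real \<Rightarrow> real"
  assumes p: "p > 1" and x0: "x0 > 0"
    and v': "\<And>x. x \<in> {0<..x0} \<Longrightarrow> (v has_real_derivative d x) (at x)"
    and d: "\<And>x. x \<in> {0<..x0} \<Longrightarrow> d x \<le> - (\<bar>v x\<bar> powr p)"
  shows "v x0 \<le> Ustar_x p x0"
proof (rule ccontr)
  assume "\<not> ?thesis"
  then have above: "v x0 > Ustar_x p x0" by simp
  have U: "Ustar_x p x0 > 0" "Ustar_x p x0 powr (1 - p) = (p - 1) * x0"
    using Ustar_x_pos Ustar_x_powr_one_minus p x0 by auto
  have decreasing: "v x0 \<le> v y" if "0 < y" "y \<le> x0" for y
  proof (rule deriv_nonpos_imp_antimono[OF _ _ \<open>y \<le> x0\<close>])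
    fix x assume "x \<in> {y..x0}"
    with that show "(v has_real_derivative d x) (at x)" "d x \<le> 0"
      using v'[of x] d[of x] by (auto intro: order_trans)
  qed
  define W where "W = v x0 powr (1 - p)"
  have "0 < W" "W < (p - 1) * x0"
    using U above p powr_less_mono2_neg[of "1 - p" "Ustar_x p x0" "v x0"] by (auto simp: W_def)
  \<comment> \<open>the point where the monotone quantity v^(1-p) - (p-1)x would force v^(1-p) \<le> 0\<close>
  define y where "y = x0 - W / (p - 1)"
  have y: "0 < y" "y \<le> x0" "(p - 1) * (x0 - y) = W"
    using \<open>0 < W\<close> \<open>W < (p - 1) * x0\<close> p by (auto simp: y_def field_simps)
  have pos: "v x > 0" if "x \<in> {y..x0}" for x
    using decreasing[of x] that y U above by auto
  have "v y powr (1 - p) + (p - 1) * (x0 - y) \<le> v x0 powr (1 - p)"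
  proof (rule powr_one_minus_increase_if_deriv_le[OF p \<open>y \<le> x0\<close>])
    fix x assume x: "x \<in> {y..x0}"
    with y show "(v has_real_derivative d x) (at x)"
      by (intro v') auto
    show "v x > 0"
      using pos[OF x] .
    show "d x \<le> - (v x powr p)"
      using d[of x] x y pos[OF x] by simp
  qed
  moreover have "v y powr (1 - p) > 0"
    using pos[of y] y by simp
  ultimately show False
    using y by (simp add: W_def)
qed

lemma subsolution_blowing_up_ge_Ustar_x:
  fixes v d :: "real \<Rightarrow> real"
  assumes p: "p > 1" and x0: "x0 > 0"
    and v': "\<And>x. x \<in> {0<..x0} \<Longrightarrow> (v has_real_derivative d x) (at x)"
    and d: "\<And>x. x \<in> {0<..x0} \<Longrightarrow> d x \<ge> - (\<bar>v x\<bar> powr p)"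
    and blowup: "filterlim v at_top (at_right 0)"
  shows "Ustar_x p x0 \<le> v x0"
proof (rule ccontr)
  assume "\<not> ?thesis"
  then have below: "v x0 < Ustar_x p x0" by simp
  have U: "Ustar_x p x0 > 0" "Ustar_x p x0 powr (1 - p) = (p - 1) * x0"
    using Ustar_x_pos Ustar_x_powr_one_minus p x0 by auto
  define b where "b = (max (v x0) 0 + Ustar_x p x0) / 2"
  have b: "0 < b" "v x0 < b" "b < Ustar_x p x0"
    using U below by (auto simp: b_def)
  define c where "c = b powr (1 - p) - (p - 1) * x0"
  have "0 < c"
    using U b p powr_less_mono2_neg[of "1 - p" b "Ustar_x p x0"] by (simp add: c_def)
  have "((\<lambda>x. v x powr (1 - p)) \<longlongrightarrow> 0) (at_right 0)"
    using p blowup by (intro tendsto_neg_powr) auto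
  then have "eventually (\<lambda>x. v x powr (1 - p) < c) (at_right 0)"
    using \<open>0 < c\<close> by (auto dest: order_tendstoD)
  moreover have "eventually (\<lambda>x. b < v x) (at_right 0)"
    using blowup by (simp add: filterlim_at_top_dense)
  moreover have "eventually (\<lambda>x. 0 < x \<and> x < x0) (at_right (0::real))"
    using eventually_at_right_real[OF x0] by simp
  ultimately have "eventually (\<lambda>x. v x powr (1 - p) < c \<and> b < v x \<and> 0 < x \<and> x < x0) (at_right 0)"
    by eventually_elim blast
  then obtain y where y: "v y powr (1 - p) < c" "b < v y" "0 < y" "y < x0"
    using eventually_happens'[OF trivial_limit_at_right_real] by blast
  have "continuous_on {y..x0} v"
  proof (intro continuous_at_imp_continuous_on ballI)
    fix x assume "x \<in> {y..x0}"
    with y show "isCont v x"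
      by (intro DERIV_isCont[OF v']) auto
  qed
  then obtain z where z: "y \<le> z" "z \<le> x0" "v z = b" and ge_b: "\<And>s. s \<in> {y..z} \<Longrightarrow> b \<le> v s"
    using first_descent_to_level[of y x0 v b] y b by auto
  have "v z powr (1 - p) \<le> v y powr (1 - p) + (p - 1) * (z - y)"
  proof (rule powr_one_minus_decrease_if_deriv_ge[OF p \<open>y \<le> z\<close>])
    fix x assume x: "x \<in> {y..z}"
    with y z show "(v has_real_derivative d x) (at x)"
      by (intro v') auto
    show pos: "v x > 0"
      using ge_b[OF x] b by simp
    show "d x \<ge> - (v x powr p)"
      using d[of x] x y z pos by simp
  qed
  moreover have "(p - 1) * (z - y) \<le> (p - 1) * x0"
    using z y p by (intro mult_left_mono) auto
  ultimately show False
    using y z by (simp add: c_def)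
qed

theorem lemma5p2:
  fixes p a t :: real and \<phi> :: "real \<Rightarrow> real"
    and u ux uxx ut :: "real \<Rightarrow> real \<Rightarrow> real"
  assumes p: "p > 2"
    and phi: "\<phi> \<in> X1"
    and t: "t > 0"
    and a: "0 < a" "a < 1/2"
    \<comment> \<open>properties of the global viscosity solution u\<close>
    and u_cont: "continuous_on ({0..1} \<times> {0..}) (\<lambda>(x, s). u x s)"
    and u_init: "\<forall>x\<in>{0..1}. u x 0 = \<phi> x"
    and u_x: "\<forall>x\<in>{0<..<1}. \<forall>s>0. ((\<lambda>y. u y s) has_real_derivative ux x s) (at x)"
    and u_xx: "\<forall>x\<in>{0<..<1}. \<forall>s>0. ((\<lambda>y. ux y s) has_real_derivative uxx x s) (at x)"
    and u_t: "\<forall>x\<in>{0<..<1}. \<forall>s>0. ((\<lambda>r. u x r) has_real_derivative ut x s) (at s)"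
    and ux_cont: "continuous_on ({0<..<1} \<times> {0<..}) (\<lambda>(x, s). ux x s)"
    and uxx_cont: "continuous_on ({0<..<1} \<times> {0<..}) (\<lambda>(x, s). uxx x s)"
    and ut_cont: "continuous_on ({0<..<1} \<times> {0<..}) (\<lambda>(x, s). ut x s)"
    and pde: "\<forall>x\<in>{0<..<1}. \<forall>s>0. ut x s - uxx x s = \<bar>ux x s\<bar> powr p"
    and ux0: "\<forall>s>0. \<exists>L::ereal. ((\<lambda>x. ereal (ux x s)) \<longlongrightarrow> L) (at_right 0)"
  shows "((\<forall>x\<in>{0<..<a}. ut x t \<le> 0) \<longrightarrow> (\<forall>x\<in>{0<..<a}. ux x t \<le> Ustar_x p x))
       \<and> ((\<forall>x\<in>{0<..<a}. ut x t \<ge> 0) \<and> filterlim (\<lambda>x. ux x t) at_top (at_right 0)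
            \<longrightarrow> (\<forall>x\<in>{0<..<a}. ux x t \<ge> Ustar_x p x))"
proof -
  have p1: "p > 1" using p by simp
  have slice: "((\<lambda>y. ux y t) has_real_derivative uxx x t) (at x)"
    "uxx x t = ut x t - \<bar>ux x t\<bar> powr p" if "x \<in> {0<..x0}" "x0 < a" for x x0
    using u_xx pde that a t by force+
  show ?thesis
  proof (intro conjI impI ballI)
    fix x0 assume "\<forall>x\<in>{0<..<a}. ut x t \<le> 0" "x0 \<in> {0<..<a}"
    then show "ux x0 t \<le> Ustar_x p x0"
      using slice by (intro supersolution_le_Ustar_x[OF p1]) force+
  next
    fix x0 assume "(\<forall>x\<in>{0<..<a}. 0 \<le> ut x t) \<and> filterlim (\<lambda>x. ux x t) at_top (at_right 0)"
      and "x0 \<in> {0<..<a}"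
    then show "Ustar_x p x0 \<le> ux x0 t"
      using slice by (intro subsolution_blowing_up_ge_Ustar_x[OF p1]) force+
  qed
qed

end
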